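(* For any integer number $q\geq 3$ the group $B_3/[B_3[3], B_3[3]](q)$ is finite.
   Context: $B_3$ is the braid group on $3$ strands with standard generators $\sigma_1,\sigma_2$. $B_3[3]$ is the level $3$ congruence subgroup, i.e. the kernel of the mod $3$ reduction $\rho_3\colon B_3\to \mathrm{Sp}_2(\mathbb{Z}/3\mathbb{Z})$ of the symplectic representation obtained by specializing the Burau representation at $t=-1$; $[B_3[3],B_3[3]]$ is its commutator subgroup. For a positive integer $q$, $B_3/[B_3[3], B_3[3]](q)$ denotes the Coxeter-type quotient of $B_3/[B_3[3], B_3[3]]$ obtained by adding the relations $\sigma_1^q=\sigma_2^q=1$. *)

theory Defs
  imports "HOL-Algebra.Group"
begin

text \<open>Braid group B_3 given by words in sigma_1, sigma_2 and their inverses.\<close>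

datatype gen = S1 | S2

type_synonym letter = "gen \<times> bool"   \<comment> \<open>(generator, is_inverse)\<close>
type_synonym word = "letter list"

definition inv_letter :: "letter \<Rightarrow> letter" where
  "inv_letter a = (fst a, \<not> snd a)"

definition inv_word :: "word \<Rightarrow> word" where
  "inv_word w = rev (map inv_letter w)"

text \<open>2x2 matrices over Z/3Z, entries (a,b,c,d) = [[a,b],[c,d]], reduced mod 3.\<close>
type_synonym mat3 = "int \<times> int \<times> int \<times> int"

fun mmul3 :: "mat3 \<Rightarrow> mat3 \<Rightarrow> mat3" where
  "mmul3 (a,b,c,d) (e,f,g,h) =
     ((a*e + b*g) mod 3, (a*f + b*h) mod 3, (c*e + d*g) mod 3, (c*f + d*h) mod 3)"

text \<open>Reduced Burau representation at t = -1, reduced mod 3: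
  sigma_1 \<mapsto> [[1,1],[0,1]], sigma_2 \<mapsto> [[1,0],[-1,1]].\<close>
fun rho3_letter :: "letter \<Rightarrow> mat3" where
  "rho3_letter (S1, False) = (1, 1, 0, 1)"
| "rho3_letter (S1, True)  = (1, 2, 0, 1)"
| "rho3_letter (S2, False) = (1, 0, 2, 1)"
| "rho3_letter (S2, True)  = (1, 0, 1, 1)"

fun rho3 :: "word \<Rightarrow> mat3" where
  "rho3 [] = (1, 0, 0, 1)"
| "rho3 (x # w) = mmul3 (rho3_letter x) (rho3 w)"

text \<open>Congruence on words defining B_3 / [B_3[3],B_3[3]] with sigma_i^q = 1.\<close>
inductive quot_rel :: "nat \<Rightarrow> word \<Rightarrow> word \<Rightarrow> bool" for q :: nat where
  refl: "quot_rel q u u"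
| sym: "quot_rel q u v \<Longrightarrow> quot_rel q v u"
| trans: "quot_rel q u v \<Longrightarrow> quot_rel q v w \<Longrightarrow> quot_rel q u w"
| cong: "quot_rel q u v \<Longrightarrow> quot_rel q (x @ u @ y) (x @ v @ y)"
| cancel: "quot_rel q [a, inv_letter a] []"
| braid: "quot_rel q [(S1,False),(S2,False),(S1,False)] [(S2,False),(S1,False),(S2,False)]"
| power: "quot_rel q (replicate q (g, False)) []"
| comm: "rho3 u = (1,0,0,1) \<Longrightarrow> rho3 v = (1,0,0,1) \<Longrightarrow>
           quot_rel q (u @ v @ inv_word u @ inv_word v) []"

definition quot_relation :: "nat \<Rightarrow> (word \<times> word) set" where
  "quot_relation q = {(u, v). quot_rel q u v}"

definition B3_quot :: "nat \<Rightarrow> word set monoid" where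
  "B3_quot q = \<lparr> carrier = UNIV // quot_relation q,
      mult = (\<lambda>X Y. \<Union>x\<in>X. \<Union>y\<in>Y. quot_relation q `` {x @ y}),
      one = quot_relation q `` {[]} \<rparr>"

end

(* The elements of B_3[3] whose q-th power is trivial in the quotient form a subgroup N: the
   image of B_3[3] is abelian, so products and inverses of such elements are again such elements.
   N is normal and contains the cubes of the generators, so modulo N the braid relation and
   sigma_1^3 = sigma_2^3 = 1 present a group of order 24 (SL_2(Z/3Z)); a coset enumeration gives
   24 explicit representatives. Schreier's rewriting process then writes every element as a
   product of finitely many fixed elements of N times a representative, and since these elements
   commute and have order dividing q, the quotient is finite. *)

theory Submission
  imports Defs
begin

abbreviation \<sigma>\<^sub>1 :: letter where "\<sigma>\<^sub>1 \<equiv> (S1, False)"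
abbreviation \<sigma>\<^sub>2 :: letter where "\<sigma>\<^sub>2 \<equiv> (S2, False)"

lemma mod_add_mult_mod_eq:
  "(a * (x mod m) + b * (y mod m)) mod m = (a * x + b * y) mod (m::int)"
  "((x mod m) * a + (y mod m) * b) mod m = (x * a + y * b) mod (m::int)"
  by (metis mod_add_eq mod_mult_right_eq, metis mod_add_eq mod_mult_left_eq)

lemma mmul3_assoc: "mmul3 (mmul3 x y) z = mmul3 x (mmul3 y z)"
  by (cases x; cases y; cases z)
    (simp only: mmul3.simps mod_add_mult_mod_eq, simp add: algebra_simps)

lemma rho3_one_left: "mmul3 (1,0,0,1) (rho3 w) = rho3 w"
proof (cases w)
  case (Cons x v)
  then show ?thesis by (cases "rho3_letter x"; cases "rho3 v") simp
qed simp

lemma rho3_append: "rho3 (u @ v) = mmul3 (rho3 u) (rho3 v)"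
  by (induction u) (simp_all add: rho3_one_left mmul3_assoc)

lemma rho3_letter_inverse: "mmul3 (rho3_letter x) (rho3_letter (inv_letter x)) = (1,0,0,1)"
  by (cases x rule: rho3_letter.cases) (simp_all add: inv_letter_def)

lemma rho3_cancel: "rho3 (w @ inv_word w @ z) = rho3 z"
proof (induction w arbitrary: z)
  case Nil
  show ?case by (simp add: inv_word_def)
next
  case (Cons x w)
  have "rho3 ((x # w) @ inv_word (x # w) @ z)
      = mmul3 (rho3_letter x) (rho3 (w @ inv_word w @ inv_letter x # z))"
    by (simp add: inv_word_def)
  also have "\<dots> = mmul3 (mmul3 (rho3_letter x) (rho3_letter (inv_letter x))) (rho3 z)"
    by (simp add: Cons.IH mmul3_assoc)
  finally show ?case by (simp add: rho3_letter_inverse rho3_one_left)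
qed

lemma rho3_append_one:
  "rho3 u = (1,0,0,1) \<Longrightarrow> rho3 v = (1,0,0,1) \<Longrightarrow> rho3 (u @ v) = (1,0,0,1)"
  by (simp add: rho3_append rho3_one_left)

lemma rho3_conj_one: "rho3 h = (1,0,0,1) \<Longrightarrow> rho3 (x @ h @ inv_word x) = (1,0,0,1)"
  using rho3_cancel[of x "[]"] by (simp add: rho3_append rho3_one_left)

lemma rho3_inv_word_one: "rho3 h = (1,0,0,1) \<Longrightarrow> rho3 (inv_word h) = (1,0,0,1)"
  using rho3_cancel[of h "[]"] by (simp add: rho3_append rho3_one_left)

lemmas [trans] = quot_rel.trans

lemma quot_rel_append: "quot_rel q u u' \<Longrightarrow> quot_rel q v v' \<Longrightarrow> quot_rel q (u @ v) (u' @ v')"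
  using quot_rel.cong[of q u u' "[]" v] quot_rel.cong[of q v v' u' "[]"] quot_rel.trans by auto

lemma quot_rel_append_left: "quot_rel q u v \<Longrightarrow> quot_rel q (x @ u) (x @ v)"
  by (simp add: quot_rel_append quot_rel.refl)

lemma quot_rel_append_right: "quot_rel q u v \<Longrightarrow> quot_rel q (u @ y) (v @ y)"
  by (simp add: quot_rel_append quot_rel.refl)

lemma quot_rel_append_inv_word: "quot_rel q (w @ inv_word w) []"
proof (induction w)
  case Nil
  show ?case by (simp add: inv_word_def quot_rel.refl)
next
  case (Cons x w)
  have "quot_rel q ([x] @ (w @ inv_word w) @ [inv_letter x]) ([x] @ [] @ [inv_letter x])"
    using Cons.IH by (rule quot_rel.cong)
  also have "quot_rel q ([x] @ [] @ [inv_letter x]) []"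
    by (simp add: quot_rel.cancel)
  finally show ?case by (simp add: inv_word_def)
qed

lemma inv_word_inv_word [simp]: "inv_word (inv_word w) = w"
  by (induction w) (simp_all add: inv_word_def inv_letter_def)

lemma quot_rel_inv_word_append: "quot_rel q (inv_word w @ w) []"
  using quot_rel_append_inv_word[of q "inv_word w"] by simp

lemma quot_rel_cancel_left: "quot_rel q (x @ inv_word w @ w @ z) (x @ z)"
  using quot_rel.cong[OF quot_rel_inv_word_append[of q w], of x z] by simp

lemma quot_rel_inv_word_Nil: "quot_rel q u [] \<Longrightarrow> quot_rel q (inv_word u) []"
  using quot_rel_append_left[of q u "[]" "inv_word u"] quot_rel_inv_word_append[of q u]
  by (metis append_Nil2 quot_rel.sym quot_rel.trans)

lemma quot_rel_commute:
  assumes "rho3 u = (1,0,0,1)" "rho3 v = (1,0,0,1)"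
  shows "quot_rel q (u @ v) (v @ u)"
proof -
  have "quot_rel q (u @ v) ((u @ v @ inv_word u) @ inv_word v @ v @ u)"
    using quot_rel_cancel_left[of q "u @ v @ inv_word u" v u]
      quot_rel_cancel_left[of q "u @ v" u "[]"]
    by (metis append.assoc append_Nil2 quot_rel.sym quot_rel.trans)
  also have "quot_rel q ((u @ v @ inv_word u) @ inv_word v @ v @ u) ([] @ v @ u)"
    using quot_rel_append_right[OF quot_rel.comm[OF assms]] by simp
  finally show ?thesis by simp
qed

definition word_pow :: "word \<Rightarrow> nat \<Rightarrow> word" where
  "word_pow w n = concat (replicate n w)"

lemma word_pow_0 [simp]: "word_pow w 0 = []"
  by (simp add: word_pow_def)

lemma word_pow_Suc: "word_pow w (Suc n) = w @ word_pow w n"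
  by (simp add: word_pow_def)

lemma word_pow_add: "word_pow w (m + n) = word_pow w m @ word_pow w n"
  by (simp add: word_pow_def replicate_add)

lemma inv_word_word_pow: "inv_word (word_pow w n) = word_pow (inv_word w) n"
  by (simp add: inv_word_def word_pow_def rev_concat map_concat rev_map)

lemma rho3_word_pow_one: "rho3 w = (1,0,0,1) \<Longrightarrow> rho3 (word_pow w n) = (1,0,0,1)"
  by (induction n) (simp_all add: word_pow_Suc rho3_append_one)

lemma quot_rel_word_pow_append:
  assumes "rho3 u = (1,0,0,1)" "rho3 v = (1,0,0,1)"
  shows "quot_rel q (word_pow (u @ v) n) (word_pow u n @ word_pow v n)"
proof (induction n)
  case 0
  show ?case by (simp add: quot_rel.refl)
next
  case (Suc n)
  have "quot_rel q (word_pow (u @ v) (Suc n)) (u @ (v @ word_pow u n) @ word_pow v n)"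
    using quot_rel_append_left[OF Suc.IH, of "u @ v"] by (simp add: word_pow_Suc)
  also have "quot_rel q \<dots> (u @ (word_pow u n @ v) @ word_pow v n)"
    using assms by (intro quot_rel.cong quot_rel_commute rho3_word_pow_one)
  finally show ?case by (simp add: word_pow_Suc)
qed

lemma quot_rel_word_pow_conj:
  "quot_rel q (word_pow (x @ h @ inv_word x) n) (x @ word_pow h n @ inv_word x)"
proof (induction n)
  case 0
  show ?case using quot_rel.sym[OF quot_rel_append_inv_word[of q x]] by simp
next
  case (Suc n)
  have "quot_rel q (word_pow (x @ h @ inv_word x) (Suc n))
      ((x @ h) @ inv_word x @ x @ word_pow h n @ inv_word x)"
    using quot_rel_append_left[OF Suc.IH, of "x @ h @ inv_word x"] by (simp add: word_pow_Suc)
  also have "quot_rel q \<dots> ((x @ h) @ word_pow h n @ inv_word x)"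
    by (rule quot_rel_cancel_left)
  finally show ?case by (simp add: word_pow_Suc)
qed

lemma quot_rel_word_pow_mod:
  assumes "quot_rel q (word_pow h q) []"
  shows "quot_rel q (word_pow h n) (word_pow h (n mod q))"
proof -
  have "quot_rel q (word_pow h (q * k)) []" for k
    by (induction k)
      (simp_all add: quot_rel.refl word_pow_add quot_rel_append[OF assms, of _ "[]", simplified])
  moreover have "word_pow h n = word_pow h (q * (n div q)) @ word_pow h (n mod q)"
    by (metis div_mult_mod_eq mult.commute word_pow_add)
  ultimately show ?thesis
    by (metis append_Nil quot_rel_append_right)
qed

text \<open>The words representing the subgroup N of the proof idea; \<open>mod_torsion q\<close> below is
  congruence modulo N.\<close>
definition torsion_word :: "nat \<Rightarrow> word \<Rightarrow> bool" where
  "torsion_word q h \<longleftrightarrow> rho3 h = (1,0,0,1) \<and> quot_rel q (word_pow h q) []"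

lemma torsion_word_Nil: "torsion_word q []"
  by (simp add: torsion_word_def word_pow_def quot_rel.refl)

lemma torsion_word_append:
  assumes "torsion_word q h" "torsion_word q k"
  shows "torsion_word q (h @ k)"
proof -
  have "quot_rel q (word_pow (h @ k) q) (word_pow h q @ word_pow k q)"
    using assms by (intro quot_rel_word_pow_append) (simp_all add: torsion_word_def)
  also have "quot_rel q (word_pow h q @ word_pow k q) ([] @ [])"
    using assms by (intro quot_rel_append) (simp_all add: torsion_word_def)
  finally show ?thesis
    using assms by (simp add: torsion_word_def rho3_append_one)
qed

lemma torsion_word_conj:
  assumes "torsion_word q h"
  shows "torsion_word q (x @ h @ inv_word x)"
proof -
  have "quot_rel q (word_pow (x @ h @ inv_word x) q) (x @ word_pow h q @ inv_word x)"
    by (rule quot_rel_word_pow_conj)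
  also have "quot_rel q (x @ word_pow h q @ inv_word x) (x @ [] @ inv_word x)"
    using assms by (intro quot_rel.cong) (simp add: torsion_word_def)
  also have "quot_rel q (x @ [] @ inv_word x) []"
    by (simp add: quot_rel_append_inv_word)
  finally show ?thesis
    using assms by (simp add: torsion_word_def rho3_conj_one)
qed

lemma torsion_word_inv_word: "torsion_word q h \<Longrightarrow> torsion_word q (inv_word h)"
  by (metis torsion_word_def quot_rel_inv_word_Nil inv_word_word_pow rho3_inv_word_one)

lemma torsion_word_cube: "torsion_word q [(g, False), (g, False), (g, False)]"
proof -
  let ?x = "(g, False)"
  have "word_pow [?x, ?x, ?x] q = replicate (q + q + q) ?x"
    by (induction q) (simp_all add: word_pow_Suc)
  also have "\<dots> = replicate q ?x @ replicate q ?x @ replicate q ?x"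
    by (simp add: replicate_add)
  finally have "quot_rel q (word_pow [?x, ?x, ?x] q) ([] @ [] @ [])"
    by (simp only: quot_rel_append quot_rel.power)
  moreover have "rho3 [?x, ?x, ?x] = (1,0,0,1)"
    by (cases g) simp_all
  ultimately show ?thesis
    by (simp add: torsion_word_def)
qed

definition mod_torsion :: "nat \<Rightarrow> word \<Rightarrow> word \<Rightarrow> bool" where
  "mod_torsion q u v \<longleftrightarrow> (\<exists>h. torsion_word q h \<and> quot_rel q u (h @ v))"

lemma mod_torsion_if_quot_rel: "quot_rel q u v \<Longrightarrow> mod_torsion q u v"
  unfolding mod_torsion_def using torsion_word_Nil by (intro exI[of _ "[]"]) simp

lemma mod_torsion_refl [simp]: "mod_torsion q u u"
  by (simp add: mod_torsion_if_quot_rel quot_rel.refl)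

lemma mod_torsion_trans [trans]:
  assumes "mod_torsion q u v" "mod_torsion q v w"
  shows "mod_torsion q u w"
proof -
  obtain h k where "torsion_word q h" "quot_rel q u (h @ v)"
    and "torsion_word q k" "quot_rel q v (k @ w)"
    using assms by (auto simp: mod_torsion_def)
  then show ?thesis
    unfolding mod_torsion_def
    by (metis append.assoc quot_rel_append_left quot_rel.trans torsion_word_append)
qed

lemma mod_torsion_sym:
  assumes "mod_torsion q u v"
  shows "mod_torsion q v u"
proof -
  obtain h where h: "torsion_word q h" "quot_rel q u (h @ v)"
    using assms by (auto simp: mod_torsion_def)
  have "quot_rel q (inv_word h @ u) ([] @ inv_word h @ h @ v)"
    using h(2) by (simp add: quot_rel_append_left)
  also have "quot_rel q ([] @ inv_word h @ h @ v) ([] @ v)"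
    by (rule quot_rel_cancel_left)
  finally have "quot_rel q v (inv_word h @ u)"
    by (simp add: quot_rel.sym)
  then show ?thesis
    unfolding mod_torsion_def using torsion_word_inv_word[OF h(1)] by blast
qed

lemma mod_torsion_append_right: "mod_torsion q u v \<Longrightarrow> mod_torsion q (u @ y) (v @ y)"
  by (metis append.assoc mod_torsion_def quot_rel_append_right)

text \<open>Moving the torsion word h past x replaces it by its conjugate, which is again a torsion word.\<close>
lemma mod_torsion_append_left:
  assumes "mod_torsion q u v"
  shows "mod_torsion q (x @ u) (x @ v)"
proof -
  obtain h where h: "torsion_word q h" "quot_rel q u (h @ v)"
    using assms by (auto simp: mod_torsion_def)
  have "quot_rel q (x @ u) ((x @ h) @ v)"
    using quot_rel_append_left[OF h(2)] by simp
  also have "quot_rel q ((x @ h) @ v) ((x @ h) @ inv_word x @ x @ v)"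
    by (rule quot_rel.sym[OF quot_rel_cancel_left])
  finally have "quot_rel q (x @ u) ((x @ h @ inv_word x) @ x @ v)"
    by simp
  then show ?thesis
    unfolding mod_torsion_def using torsion_word_conj[OF h(1)] by blast
qed

lemma mod_torsion_cong: "mod_torsion q u v \<Longrightarrow> mod_torsion q (x @ u @ y) (x @ v @ y)"
  by (simp add: mod_torsion_append_left mod_torsion_append_right)

lemma mod_torsion_cube: "mod_torsion q (x @ [(g, False), (g, False), (g, False)] @ y) (x @ y)"
proof -
  have "mod_torsion q [(g, False), (g, False), (g, False)] []"
    unfolding mod_torsion_def using torsion_word_cube quot_rel.refl by fastforce
  then show ?thesis
    using mod_torsion_cong by fastforce
qed

lemma mod_torsion_braid:
  "mod_torsion q (x @ [\<sigma>\<^sub>2, \<sigma>\<^sub>1, \<sigma>\<^sub>2] @ y) (x @ [\<sigma>\<^sub>1, \<sigma>\<^sub>2, \<sigma>\<^sub>1] @ y)"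
  by (intro mod_torsion_if_quot_rel quot_rel.cong quot_rel.sym[OF quot_rel.braid])

lemma mod_torsion_inverse_letter:
  "mod_torsion q (x @ [(g, True)] @ y) (x @ [(g, False), (g, False)] @ y)"
proof -
  have "mod_torsion q [(g, True)] ([(g, True)] @ [(g, False), (g, False), (g, False)] @ [])"
    using mod_torsion_sym[OF mod_torsion_cube[of q "[(g, True)]" g "[]"]] by simp
  also have "mod_torsion q \<dots> [(g, False), (g, False)]"
    using quot_rel.cong[OF quot_rel.cancel[of q "(g, True)"], of "[]" "[(g, False), (g, False)]"]
    by (simp add: inv_letter_def mod_torsion_if_quot_rel)
  finally show ?thesis
    by (rule mod_torsion_cong)
qed

text \<open>Representatives of the right cosets of the subgroup generated by \<open>\<sigma>\<^sub>1\<close> in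
  \<open>\<langle>\<sigma>\<^sub>1, \<sigma>\<^sub>2 | \<sigma>\<^sub>1\<^sup>3, \<sigma>\<^sub>2\<^sup>3, \<sigma>\<^sub>1\<sigma>\<^sub>2\<sigma>\<^sub>1 = \<sigma>\<^sub>2\<sigma>\<^sub>1\<sigma>\<^sub>2\<rangle>\<close>, a group of order 24
  (isomorphic to \<open>SL\<^sub>2(\<int>/3\<int>)\<close>), as found by Todd-Coxeter enumeration.\<close>
definition coset_reps :: "word set" where
  "coset_reps = {[], [\<sigma>\<^sub>2], [\<sigma>\<^sub>2, \<sigma>\<^sub>1], [\<sigma>\<^sub>2, \<sigma>\<^sub>2], [\<sigma>\<^sub>2, \<sigma>\<^sub>1, \<sigma>\<^sub>1], [\<sigma>\<^sub>2, \<sigma>\<^sub>2, \<sigma>\<^sub>1],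
    [\<sigma>\<^sub>2, \<sigma>\<^sub>1, \<sigma>\<^sub>1, \<sigma>\<^sub>2], [\<sigma>\<^sub>2, \<sigma>\<^sub>2, \<sigma>\<^sub>1, \<sigma>\<^sub>1]}"

definition sigma1_powers :: "word set" where
  "sigma1_powers = {[], [\<sigma>\<^sub>1], [\<sigma>\<^sub>1, \<sigma>\<^sub>1]}"

lemma coset_relations:
  "mod_torsion q [\<sigma>\<^sub>2, \<sigma>\<^sub>2, \<sigma>\<^sub>1, \<sigma>\<^sub>2] [\<sigma>\<^sub>1, \<sigma>\<^sub>2, \<sigma>\<^sub>1, \<sigma>\<^sub>1]"
  "mod_torsion q [\<sigma>\<^sub>2, \<sigma>\<^sub>1, \<sigma>\<^sub>1, \<sigma>\<^sub>2, \<sigma>\<^sub>1] [\<sigma>\<^sub>1, \<sigma>\<^sub>2, \<sigma>\<^sub>1, \<sigma>\<^sub>1, \<sigma>\<^sub>2]"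
  "mod_torsion q [\<sigma>\<^sub>2, \<sigma>\<^sub>1, \<sigma>\<^sub>1, \<sigma>\<^sub>2, \<sigma>\<^sub>2] [\<sigma>\<^sub>1, \<sigma>\<^sub>1, \<sigma>\<^sub>2, \<sigma>\<^sub>2, \<sigma>\<^sub>1]"
  "mod_torsion q [\<sigma>\<^sub>2, \<sigma>\<^sub>2, \<sigma>\<^sub>1, \<sigma>\<^sub>1, \<sigma>\<^sub>2] [\<sigma>\<^sub>1, \<sigma>\<^sub>2, \<sigma>\<^sub>2, \<sigma>\<^sub>1, \<sigma>\<^sub>1]"
proof -
  have "mod_torsion q [\<sigma>\<^sub>2, \<sigma>\<^sub>2, \<sigma>\<^sub>1, \<sigma>\<^sub>2] [\<sigma>\<^sub>2, \<sigma>\<^sub>1, \<sigma>\<^sub>2, \<sigma>\<^sub>1]"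
    using mod_torsion_braid[of q "[\<sigma>\<^sub>2]" "[]"] by simp
  also have "mod_torsion q \<dots> [\<sigma>\<^sub>1, \<sigma>\<^sub>2, \<sigma>\<^sub>1, \<sigma>\<^sub>1]"
    using mod_torsion_braid[of q "[]" "[\<sigma>\<^sub>1]"] by simp
  finally show "mod_torsion q [\<sigma>\<^sub>2, \<sigma>\<^sub>2, \<sigma>\<^sub>1, \<sigma>\<^sub>2] [\<sigma>\<^sub>1, \<sigma>\<^sub>2, \<sigma>\<^sub>1, \<sigma>\<^sub>1]" .
next
  have "mod_torsion q [\<sigma>\<^sub>2, \<sigma>\<^sub>1, \<sigma>\<^sub>1, \<sigma>\<^sub>2, \<sigma>\<^sub>1] [\<sigma>\<^sub>2, \<sigma>\<^sub>1, \<sigma>\<^sub>2, \<sigma>\<^sub>1, \<sigma>\<^sub>2]"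
    using mod_torsion_sym[OF mod_torsion_braid[of q "[\<sigma>\<^sub>2, \<sigma>\<^sub>1]" "[]"]] by simp
  also have "mod_torsion q \<dots> [\<sigma>\<^sub>1, \<sigma>\<^sub>2, \<sigma>\<^sub>1, \<sigma>\<^sub>1, \<sigma>\<^sub>2]"
    using mod_torsion_braid[of q "[]" "[\<sigma>\<^sub>1, \<sigma>\<^sub>2]"] by simp
  finally show "mod_torsion q [\<sigma>\<^sub>2, \<sigma>\<^sub>1, \<sigma>\<^sub>1, \<sigma>\<^sub>2, \<sigma>\<^sub>1] [\<sigma>\<^sub>1, \<sigma>\<^sub>2, \<sigma>\<^sub>1, \<sigma>\<^sub>1, \<sigma>\<^sub>2]" .
next
  have "mod_torsion q [\<sigma>\<^sub>2, \<sigma>\<^sub>1, \<sigma>\<^sub>1, \<sigma>\<^sub>2, \<sigma>\<^sub>2] [\<sigma>\<^sub>1, \<sigma>\<^sub>1, \<sigma>\<^sub>1, \<sigma>\<^sub>2, \<sigma>\<^sub>1, \<sigma>\<^sub>1, \<sigma>\<^sub>2, \<sigma>\<^sub>2]"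
    using mod_torsion_sym[OF mod_torsion_cube[of q "[]" S1 "[\<sigma>\<^sub>2, \<sigma>\<^sub>1, \<sigma>\<^sub>1, \<sigma>\<^sub>2, \<sigma>\<^sub>2]"]] by simp
  also have "mod_torsion q \<dots> [\<sigma>\<^sub>1, \<sigma>\<^sub>1, \<sigma>\<^sub>2, \<sigma>\<^sub>1, \<sigma>\<^sub>2, \<sigma>\<^sub>1, \<sigma>\<^sub>2, \<sigma>\<^sub>2]"
    using mod_torsion_sym[OF mod_torsion_braid[of q "[\<sigma>\<^sub>1, \<sigma>\<^sub>1]" "[\<sigma>\<^sub>1, \<sigma>\<^sub>2, \<sigma>\<^sub>2]"]] by simp
  also have "mod_torsion q \<dots> [\<sigma>\<^sub>1, \<sigma>\<^sub>1, \<sigma>\<^sub>2, \<sigma>\<^sub>2, \<sigma>\<^sub>1, \<sigma>\<^sub>2, \<sigma>\<^sub>2, \<sigma>\<^sub>2]"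
    using mod_torsion_sym[OF mod_torsion_braid[of q "[\<sigma>\<^sub>1, \<sigma>\<^sub>1, \<sigma>\<^sub>2]" "[\<sigma>\<^sub>2, \<sigma>\<^sub>2]"]] by simp
  also have "mod_torsion q \<dots> [\<sigma>\<^sub>1, \<sigma>\<^sub>1, \<sigma>\<^sub>2, \<sigma>\<^sub>2, \<sigma>\<^sub>1]"
    using mod_torsion_cube[of q "[\<sigma>\<^sub>1, \<sigma>\<^sub>1, \<sigma>\<^sub>2, \<sigma>\<^sub>2, \<sigma>\<^sub>1]" S2 "[]"] by simp
  finally show "mod_torsion q [\<sigma>\<^sub>2, \<sigma>\<^sub>1, \<sigma>\<^sub>1, \<sigma>\<^sub>2, \<sigma>\<^sub>2] [\<sigma>\<^sub>1, \<sigma>\<^sub>1, \<sigma>\<^sub>2, \<sigma>\<^sub>2, \<sigma>\<^sub>1]" .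
next
  have "mod_torsion q [\<sigma>\<^sub>2, \<sigma>\<^sub>2, \<sigma>\<^sub>1, \<sigma>\<^sub>1, \<sigma>\<^sub>2] [\<sigma>\<^sub>2, \<sigma>\<^sub>2, \<sigma>\<^sub>1, \<sigma>\<^sub>1, \<sigma>\<^sub>2, \<sigma>\<^sub>1, \<sigma>\<^sub>1, \<sigma>\<^sub>1]"
    using mod_torsion_sym[OF mod_torsion_cube[of q "[\<sigma>\<^sub>2, \<sigma>\<^sub>2, \<sigma>\<^sub>1, \<sigma>\<^sub>1, \<sigma>\<^sub>2]" S1 "[]"]] by simp
  also have "mod_torsion q \<dots> [\<sigma>\<^sub>2, \<sigma>\<^sub>2, \<sigma>\<^sub>1, \<sigma>\<^sub>2, \<sigma>\<^sub>1, \<sigma>\<^sub>2, \<sigma>\<^sub>1, \<sigma>\<^sub>1]"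
    using mod_torsion_sym[OF mod_torsion_braid[of q "[\<sigma>\<^sub>2, \<sigma>\<^sub>2, \<sigma>\<^sub>1]" "[\<sigma>\<^sub>1, \<sigma>\<^sub>1]"]] by simp
  also have "mod_torsion q \<dots> [\<sigma>\<^sub>2, \<sigma>\<^sub>2, \<sigma>\<^sub>2, \<sigma>\<^sub>1, \<sigma>\<^sub>2, \<sigma>\<^sub>2, \<sigma>\<^sub>1, \<sigma>\<^sub>1]"
    using mod_torsion_sym[OF mod_torsion_braid[of q "[\<sigma>\<^sub>2, \<sigma>\<^sub>2]" "[\<sigma>\<^sub>2, \<sigma>\<^sub>1, \<sigma>\<^sub>1]"]] by simp
  also have "mod_torsion q \<dots> [\<sigma>\<^sub>1, \<sigma>\<^sub>2, \<sigma>\<^sub>2, \<sigma>\<^sub>1, \<sigma>\<^sub>1]"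
    using mod_torsion_cube[of q "[]" S2 "[\<sigma>\<^sub>1, \<sigma>\<^sub>2, \<sigma>\<^sub>2, \<sigma>\<^sub>1, \<sigma>\<^sub>1]"] by simp
  finally show "mod_torsion q [\<sigma>\<^sub>2, \<sigma>\<^sub>2, \<sigma>\<^sub>1, \<sigma>\<^sub>1, \<sigma>\<^sub>2] [\<sigma>\<^sub>1, \<sigma>\<^sub>2, \<sigma>\<^sub>2, \<sigma>\<^sub>1, \<sigma>\<^sub>1]" .
qed

lemma coset_reps_append_letter:
  assumes "t \<in> coset_reps"
  shows "\<exists>u\<in>sigma1_powers. \<exists>t'\<in>coset_reps. mod_torsion q (t @ [(g, False)]) (u @ t')"
proof -
  have "mod_torsion q [\<sigma>\<^sub>2, \<sigma>\<^sub>2, \<sigma>\<^sub>2] []"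
       "mod_torsion q [\<sigma>\<^sub>2, \<sigma>\<^sub>1, \<sigma>\<^sub>1, \<sigma>\<^sub>1] [\<sigma>\<^sub>2]"
       "mod_torsion q [\<sigma>\<^sub>2, \<sigma>\<^sub>2, \<sigma>\<^sub>1, \<sigma>\<^sub>1, \<sigma>\<^sub>1] [\<sigma>\<^sub>2, \<sigma>\<^sub>2]"
       "mod_torsion q [\<sigma>\<^sub>2, \<sigma>\<^sub>1, \<sigma>\<^sub>2] [\<sigma>\<^sub>1, \<sigma>\<^sub>2, \<sigma>\<^sub>1]"
    using mod_torsion_cube[of q "[]" S2 "[]"] mod_torsion_cube[of q "[\<sigma>\<^sub>2]" S1 "[]"]
      mod_torsion_cube[of q "[\<sigma>\<^sub>2, \<sigma>\<^sub>2]" S1 "[]"] mod_torsion_braid[of q "[]" "[]"]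
    by simp_all
  then show ?thesis
    using assms coset_relations[of q] by (cases g) (auto simp: coset_reps_def sigma1_powers_def)
qed

lemma sigma1_powers_append:
  assumes "u \<in> sigma1_powers" "u' \<in> sigma1_powers"
  shows "\<exists>u''\<in>sigma1_powers. mod_torsion q (u @ u') u''"
proof -
  have "mod_torsion q [\<sigma>\<^sub>1, \<sigma>\<^sub>1, \<sigma>\<^sub>1] []" "mod_torsion q [\<sigma>\<^sub>1, \<sigma>\<^sub>1, \<sigma>\<^sub>1, \<sigma>\<^sub>1] [\<sigma>\<^sub>1]"
    using mod_torsion_cube[of q "[]" S1 "[]"] mod_torsion_cube[of q "[]" S1 "[\<sigma>\<^sub>1]"] by simp_all
  then show ?thesis
    using assms by (auto simp: sigma1_powers_def)
qed

lemma mod_torsion_normal_form_append_letter: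
  assumes "u \<in> sigma1_powers" "t \<in> coset_reps"
  shows "\<exists>u'\<in>sigma1_powers. \<exists>t'\<in>coset_reps. mod_torsion q (u @ t @ [(g, False)]) (u' @ t')"
proof -
  obtain v t' where v: "v \<in> sigma1_powers" "t' \<in> coset_reps" "mod_torsion q (t @ [(g, False)]) (v @ t')"
    using coset_reps_append_letter[OF assms(2)] by blast
  obtain u' where u': "u' \<in> sigma1_powers" "mod_torsion q (u @ v) u'"
    using sigma1_powers_append[OF assms(1) v(1)] by blast
  have "mod_torsion q (u @ t @ [(g, False)]) ((u @ v) @ t')"
    using mod_torsion_append_left[OF v(3)] by simp
  also have "mod_torsion q \<dots> (u' @ t')"
    using mod_torsion_append_right[OF u'(2)] .
  finally show ?thesis
    using u'(1) v(2) by blast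
qed

lemma mod_torsion_normal_form: "\<exists>u\<in>sigma1_powers. \<exists>t\<in>coset_reps. mod_torsion q w (u @ t)"
proof (induction w rule: rev_induct)
  case Nil
  show ?case by (auto simp: sigma1_powers_def coset_reps_def)
next
  case (snoc x w)
  then obtain u t where ut: "u \<in> sigma1_powers" "t \<in> coset_reps" "mod_torsion q w (u @ t)"
    by blast
  obtain g b where x: "x = (g, b)"
    by fastforce
  show ?case
  proof (cases b)
    case False
    have "mod_torsion q (w @ [x]) (u @ t @ [(g, False)])"
      using mod_torsion_append_right[OF ut(3)] x False by simp
    then show ?thesis
      using mod_torsion_normal_form_append_letter[OF ut(1,2)] mod_torsion_trans by blast
  next
    case True
    obtain u1 t1 where ut1: "u1 \<in> sigma1_powers" "t1 \<in> coset_reps"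
        "mod_torsion q (u @ t @ [(g, False)]) (u1 @ t1)"
      using mod_torsion_normal_form_append_letter[OF ut(1,2)] by blast
    obtain u2 t2 where ut2: "u2 \<in> sigma1_powers" "t2 \<in> coset_reps"
        "mod_torsion q (u1 @ t1 @ [(g, False)]) (u2 @ t2)"
      using mod_torsion_normal_form_append_letter[OF ut1(1,2)] by blast
    have "mod_torsion q (w @ [x]) (w @ [(g, False), (g, False)])"
      using mod_torsion_inverse_letter[of q w g "[]"] x True by simp
    also have "mod_torsion q \<dots> ((u @ t @ [(g, False)]) @ [(g, False)])"
      using mod_torsion_append_right[OF ut(3)] by simp
    also have "mod_torsion q \<dots> ((u1 @ t1) @ [(g, False)])"
      using mod_torsion_append_right[OF ut1(3)] .
    also have "mod_torsion q \<dots> (u2 @ t2)"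
      using ut2(3) by simp
    finally show ?thesis
      using ut2(1,2) by blast
  qed
qed

lemma finite_letters: "finite (UNIV :: letter set)"
proof -
  have "(UNIV :: gen set) = {S1, S2}"
    using gen.exhaust by blast
  then have "finite (UNIV :: gen set)"
    by (metis finite.emptyI finite.insertI)
  then show ?thesis
    using finite_cartesian_product[of "UNIV :: gen set" "UNIV :: bool set"] by simp
qed

lemma schreier_decomposition:
  assumes "finite T" "[] \<in> T" "\<And>w. \<exists>t\<in>T. mod_torsion q w t"
  obtains S where "finite S" "\<forall>h\<in>S. torsion_word q h"
    "\<And>w. \<exists>hs t. set hs \<subseteq> S \<and> t \<in> T \<and> quot_rel q w (concat hs @ t)"
proof -
  define schreier_gen where "schreier_gen =
    (\<lambda>(t, x). SOME h. torsion_word q h \<and> (\<exists>t'\<in>T. quot_rel q (t @ [x]) (h @ t')))"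
  have schreier_gen: "torsion_word q (schreier_gen (t, x)) \<and>
      (\<exists>t'\<in>T. quot_rel q (t @ [x]) (schreier_gen (t, x) @ t'))" for t x
  proof -
    have "\<exists>h. torsion_word q h \<and> (\<exists>t'\<in>T. quot_rel q (t @ [x]) (h @ t'))"
      using assms(3)[of "t @ [x]"] unfolding mod_torsion_def by blast
    from someI_ex[OF this] show ?thesis
      unfolding schreier_gen_def by simp
  qed
  define S where "S = schreier_gen ` (T \<times> UNIV)"
  have "\<exists>hs t. set hs \<subseteq> S \<and> t \<in> T \<and> quot_rel q w (concat hs @ t)" for w
  proof (induction w rule: rev_induct)
    case Nil
    show ?case
      using assms(2) quot_rel.refl[of q "[]"] by (intro exI[of _ "[]"]) auto
  next
    case (snoc x w)
    then obtain hs t where hs: "set hs \<subseteq> S" "t \<in> T" "quot_rel q w (concat hs @ t)"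
      by blast
    obtain t' where t': "t' \<in> T" "quot_rel q (t @ [x]) (schreier_gen (t, x) @ t')"
      using schreier_gen by blast
    have "quot_rel q (w @ [x]) (concat hs @ t @ [x])"
      using quot_rel_append_right[OF hs(3)] by simp
    also have "quot_rel q \<dots> (concat (hs @ [schreier_gen (t, x)]) @ t')"
      using quot_rel_append_left[OF t'(2)] by simp
    finally show ?case
      using hs(1,2) t'(1)
      by (intro exI[of _ "hs @ [schreier_gen (t, x)]"] exI[of _ t']) (auto simp: S_def)
  qed
  moreover have "finite S"
    using assms(1) finite_letters by (simp add: S_def)
  ultimately show thesis
    using that schreier_gen by (auto simp: S_def)
qed

fun pow_product :: "word list \<Rightarrow> nat list \<Rightarrow> word" where
  "pow_product (s # ss) (e # es) = word_pow s e @ pow_product ss es"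
| "pow_product _ _ = []"

lemma torsion_word_prepend_pow_product:
  assumes "q > 0" "\<forall>s\<in>set ss. torsion_word q s" "h \<in> set ss"
    "length es = length ss" "\<forall>e\<in>set es. e < q"
  shows "\<exists>es'. length es' = length ss \<and> (\<forall>e\<in>set es'. e < q) \<and>
    quot_rel q (h @ pow_product ss es) (pow_product ss es')"
  using assms(2-)
proof (induction ss arbitrary: es)
  case Nil
  then show ?case by simp
next
  case (Cons s ss)
  obtain e es0 where es: "es = e # es0"
    using Cons.prems(3) by (cases es) auto
  show ?case
  proof (cases "h = s")
    case True
    have "quot_rel q (word_pow s q) []"
      using Cons.prems(1) by (simp add: torsion_word_def)
    then have "quot_rel q (word_pow s (Suc e) @ pow_product ss es0)
        (word_pow s (Suc e mod q) @ pow_product ss es0)"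
      by (intro quot_rel_append_right quot_rel_word_pow_mod)
    then show ?thesis
      using True es Cons.prems(3,4) \<open>q > 0\<close>
      by (intro exI[of _ "Suc e mod q # es0"]) (simp add: word_pow_Suc)
  next
    case False
    then have "\<exists>es1. length es1 = length ss \<and> (\<forall>e\<in>set es1. e < q) \<and>
        quot_rel q (h @ pow_product ss es0) (pow_product ss es1)"
      using Cons.IH[of es0] Cons.prems es by simp
    then obtain es1 where es1: "length es1 = length ss" "\<forall>e\<in>set es1. e < q"
        "quot_rel q (h @ pow_product ss es0) (pow_product ss es1)"
      by blast
    have "rho3 h = (1,0,0,1)" "rho3 (word_pow s e) = (1,0,0,1)"
      using Cons.prems(1,2) by (auto simp: torsion_word_def rho3_word_pow_one)
    then have "quot_rel q ((h @ word_pow s e) @ pow_product ss es0)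
        ((word_pow s e @ h) @ pow_product ss es0)"
      by (intro quot_rel_append_right quot_rel_commute)
    also have "quot_rel q \<dots> (word_pow s e @ pow_product ss es1)"
      using quot_rel_append_left[OF es1(3)] by simp
    finally show ?thesis
      using es es1(1,2) Cons.prems(4) by (intro exI[of _ "e # es1"]) auto
  qed
qed

lemma concat_torsion_words_pow_product:
  assumes "q > 0" "\<forall>s\<in>set ss. torsion_word q s" "set hs \<subseteq> set ss"
  shows "\<exists>es. length es = length ss \<and> (\<forall>e\<in>set es. e < q) \<and>
    quot_rel q (concat hs) (pow_product ss es)"
  using assms(3)
proof (induction hs)
  case Nil
  have "pow_product ss (replicate (length ss) 0) = []"
    by (induction ss) simp_all
  then show ?case
    using assms(1) quot_rel.refl by (intro exI[of _ "replicate (length ss) 0"]) simp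
next
  case (Cons h hs)
  then obtain es where es: "length es = length ss" "\<forall>e\<in>set es. e < q"
      "quot_rel q (concat hs) (pow_product ss es)"
    by auto
  obtain es' where es': "length es' = length ss" "\<forall>e\<in>set es'. e < q"
      "quot_rel q (h @ pow_product ss es) (pow_product ss es')"
    using torsion_word_prepend_pow_product[OF assms(1,2) _ es(1,2), of h] Cons.prems by auto
  have "quot_rel q (concat (h # hs)) (h @ pow_product ss es)"
    using quot_rel_append_left[OF es(3)] by simp
  also note es'(3)
  finally show ?case
    using es'(1,2) by blast
qed

lemma finite_torsion_products:
  assumes "q > 0" "finite S" "\<forall>h\<in>S. torsion_word q h"
  obtains F where "finite F" "\<And>hs. set hs \<subseteq> S \<Longrightarrow> \<exists>f\<in>F. quot_rel q (concat hs) f"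
proof -
  obtain ss where ss: "set ss = S"
    using finite_list[OF assms(2)] by blast
  let ?F = "pow_product ss ` {es. set es \<subseteq> {..<q} \<and> length es = length ss}"
  have "finite ?F"
    by (intro finite_imageI finite_lists_length_eq) simp
  moreover have "\<exists>f\<in>?F. quot_rel q (concat hs) f" if "set hs \<subseteq> S" for hs
    using concat_torsion_words_pow_product[OF assms(1), of ss hs] that ss assms(3)
    by (fastforce simp: subset_eq)
  ultimately show thesis
    using that by blast
qed

lemma finite_carrier_B3_quot:
  assumes "finite W" "\<And>w. \<exists>w'\<in>W. quot_rel q w w'"
  shows "finite (carrier (B3_quot q))"
proof -
  have "carrier (B3_quot q) \<subseteq> (\<lambda>w. quot_relation q `` {w}) ` W"
  proof
    fix X
    assume "X \<in> carrier (B3_quot q)"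
    then obtain w where X: "X = quot_relation q `` {w}"
      by (auto simp: B3_quot_def elim: quotientE)
    obtain w' where w': "w' \<in> W" "quot_rel q w w'"
      using assms(2) by blast
    then have "quot_relation q `` {w} = quot_relation q `` {w'}"
      unfolding quot_relation_def using quot_rel.sym quot_rel.trans by blast
    then show "X \<in> (\<lambda>w. quot_relation q `` {w}) ` W"
      using X w'(1) by blast
  qed
  then show ?thesis
    using assms(1) finite_subset by blast
qed

theorem proposition3p3:
  fixes q :: nat
  assumes "q \<ge> 3"
  shows "finite (carrier (B3_quot q))"
proof -
  have "q > 0"
    using assms by simp
  define T where "T = (\<lambda>(u, t). u @ t) ` (sigma1_powers \<times> coset_reps)"
  have "finite T"
    unfolding T_def sigma1_powers_def coset_reps_def by simp
  moreover have "[] \<in> T"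
    unfolding T_def sigma1_powers_def coset_reps_def by (rule image_eqI[of _ _ "([], [])"]) simp_all
  moreover have "\<exists>t\<in>T. mod_torsion q w t" for w
    using mod_torsion_normal_form[of q w] unfolding T_def by fastforce
  ultimately obtain S where S: "finite S" "\<forall>h\<in>S. torsion_word q h"
      "\<And>w. \<exists>hs t. set hs \<subseteq> S \<and> t \<in> T \<and> quot_rel q w (concat hs @ t)"
    using schreier_decomposition by metis
  obtain F where F: "finite F" "\<And>hs. set hs \<subseteq> S \<Longrightarrow> \<exists>f\<in>F. quot_rel q (concat hs) f"
    using finite_torsion_products[OF \<open>q > 0\<close> S(1,2)] by blast
  show ?thesis
  proof (rule finite_carrier_B3_quot)
    show "finite ((\<lambda>(f, t). f @ t) ` (F \<times> T))"
      using F(1) \<open>finite T\<close> by simp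
    show "\<exists>w'\<in>(\<lambda>(f, t). f @ t) ` (F \<times> T). quot_rel q w w'" for w
    proof -
      obtain hs t where "set hs \<subseteq> S" "t \<in> T" "quot_rel q w (concat hs @ t)"
        using S(3) by blast
      moreover obtain f where "f \<in> F" "quot_rel q (concat hs) f"
        using F(2) \<open>set hs \<subseteq> S\<close> by blast
      ultimately show ?thesis
        by (intro bexI[of _ "f @ t"]) (auto intro: quot_rel.trans quot_rel_append_right)
    qed
  qed
qed

end
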